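(* Let $\mathcal{H}$ be an $n$-dimensional (real or complex) Hilbert space, let $F=\{f_i\}_{i=1}^N$ be a tight frame for $\mathcal{H}$, and let $\{q_i\}_{i=1}^N$ be the weight number sequence associated with a probability sequence $\{p_i\}_{i=1}^N$. Then the canonical dual $S_F^{-1}F$ is a 1-erasure probabilistic optimal dual (POD) of $F$ if and only if $S_F^{-1}F\in\Delta_F^{(1)}$.
   Context: A finite sequence $F=\{f_i\}_{i=1}^N$ in $\mathcal{H}$ is a frame if there are $A,B>0$ with $A\|f\|^2\le\sum_{i=1}^N|\langle f,f_i\rangle|^2\le B\|f\|^2$ for all $f$; it is tight if one can take $A=B$. The frame operator is $S_Ff=\sum_{i=1}^N\langle f,f_i\rangle f_i$ and the canonical dual is $S_F^{-1}F=\{S_F^{-1}f_i\}_{i=1}^N$. A frame $G=\{g_i\}_{i=1}^N$ is a dual of $F$ if $f=\sum_i\langle f,f_i\rangle g_i=\sum_i\langle f,g_i\rangle f_i$ for all $f$. A probability sequence is $\{p_i\}_{i=1}^N$ with $0\le p_i\le1$, $\sum p_i=1$; weight numbers $q_i=\frac{\sum_{j} p_j}{\sum_{j} p_j-p_i}\cdot\frac{N-1}{n}$. For $\Lambda\subseteq\{1,\dots,N\}$ the error operator is $E_{\Lambda,(F,G)}f=\sum_{i\in\Lambda}q_i\langle f,f_i\rangle g_i$. Set $\mathcal{O}_P^{(1)}(F,G)=\max_{|\Lambda|=1}\|E_{\Lambda,(F,G)}\|$ and $\mathcal{A}_P^{(1)}(F,G)=\max_{|\Lambda|=1}\frac{\|E_{\Lambda,(F,G)}\|+\rho(E_{\Lambda,(F,G)})}{2}$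 ($\rho$ = spectral radius). A dual $G$ of $F$ is a 1-erasure POD of $F$ if $\mathcal{O}_P^{(1)}(F,G)=\min\{\mathcal{O}_P^{(1)}(F,G'):G'\text{ a dual of }F\}$. $\Delta_F^{(1)}$ is the set of duals $G$ of $F$ minimizing $\mathcal{A}_P^{(1)}(F,G)$ over all duals of $F$ (1-erasure PASOD-frames). *)

theory Defs
  imports "Jordan_Normal_Form.Spectral_Radius"
begin

text \<open>The n-dimensional Hilbert space over the scalar field K (K = reals, embedded in
  the complex numbers, or K = all complex numbers) is modelled as K^n inside
  complex n-vectors, with the standard inner product (linear in the first argument).
  Finite sequences are indexed by 0..N-1.\<close>

definition hspace :: "complex set \<Rightarrow> nat \<Rightarrow> complex vec set" where
  "hspace K n = {v \<in> carrier_vec n. \<forall>i<n. v $ i \<in> K}"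

definition inner :: "complex vec \<Rightarrow> complex vec \<Rightarrow> complex" where
  "inner f g = f \<bullet>c g"

definition vnorm :: "complex vec \<Rightarrow> real" where
  "vnorm v = sqrt (\<Sum>i<dim_vec v. (cmod (v $ i))\<^sup>2)"

definition is_frame :: "complex set \<Rightarrow> nat \<Rightarrow> nat \<Rightarrow> (nat \<Rightarrow> complex vec) \<Rightarrow> bool" where
  "is_frame K n N F \<longleftrightarrow> (\<forall>i<N. F i \<in> hspace K n) \<and>
     (\<exists>A B. A > 0 \<and> B > 0 \<and> (\<forall>f \<in> hspace K n.
        A * (vnorm f)\<^sup>2 \<le> (\<Sum>i<N. (cmod (inner f (F i)))\<^sup>2) \<and>
        (\<Sum>i<N. (cmod (inner f (F i)))\<^sup>2) \<le> B * (vnorm f)\<^sup>2))"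

definition is_tight_frame :: "complex set \<Rightarrow> nat \<Rightarrow> nat \<Rightarrow> (nat \<Rightarrow> complex vec) \<Rightarrow> bool" where
  "is_tight_frame K n N F \<longleftrightarrow> (\<forall>i<N. F i \<in> hspace K n) \<and>
     (\<exists>A. A > 0 \<and> (\<forall>f \<in> hspace K n.
        A * (vnorm f)\<^sup>2 \<le> (\<Sum>i<N. (cmod (inner f (F i)))\<^sup>2) \<and>
        (\<Sum>i<N. (cmod (inner f (F i)))\<^sup>2) \<le> A * (vnorm f)\<^sup>2))"

text \<open>Frame operator S_F f = sum_i <f,f_i> f_i, as an n x n matrix.\<close>
definition frame_op :: "nat \<Rightarrow> nat \<Rightarrow> (nat \<Rightarrow> complex vec) \<Rightarrow> complex mat" where
  "frame_op n N F = mat n n (\<lambda>(j,k). \<Sum>i<N. F i $ j * cnj (F i $ k))"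

definition inv_op :: "nat \<Rightarrow> complex mat \<Rightarrow> complex mat" where
  "inv_op n S = (THE M. M \<in> carrier_mat n n \<and> S * M = 1\<^sub>m n \<and> M * S = 1\<^sub>m n)"

definition canonical_dual :: "nat \<Rightarrow> nat \<Rightarrow> (nat \<Rightarrow> complex vec) \<Rightarrow> nat \<Rightarrow> complex vec" where
  "canonical_dual n N F = (\<lambda>i. inv_op n (frame_op n N F) *\<^sub>v F i)"

definition is_dual :: "complex set \<Rightarrow> nat \<Rightarrow> nat \<Rightarrow> (nat \<Rightarrow> complex vec) \<Rightarrow> (nat \<Rightarrow> complex vec) \<Rightarrow> bool" where
  "is_dual K n N F G \<longleftrightarrow> is_frame K n N G \<and>
     (\<forall>f \<in> hspace K n.
        f = finsum_vec TYPE(complex) n (\<lambda>i. inner f (F i) \<cdot>\<^sub>v G i) {..<N} \<and>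
        f = finsum_vec TYPE(complex) n (\<lambda>i. inner f (G i) \<cdot>\<^sub>v F i) {..<N})"

definition prob_seq :: "nat \<Rightarrow> (nat \<Rightarrow> real) \<Rightarrow> bool" where
  "prob_seq N p \<longleftrightarrow> (\<forall>i<N. 0 \<le> p i \<and> p i \<le> 1) \<and> (\<Sum>i<N. p i) = 1"

definition weight :: "nat \<Rightarrow> nat \<Rightarrow> (nat \<Rightarrow> real) \<Rightarrow> nat \<Rightarrow> real" where
  "weight n N p i = (\<Sum>j<N. p j) / ((\<Sum>j<N. p j) - p i) * ((real N - 1) / real n)"

text \<open>Error operator E_{Lambda,(F,G)} f = sum_{i in Lambda} q_i <f,f_i> g_i, as a matrix.\<close>
definition err_op :: "nat \<Rightarrow> nat \<Rightarrow> (nat \<Rightarrow> real) \<Rightarrow> nat set \<Rightarrow> (nat \<Rightarrow> complex vec) \<Rightarrow> (nat \<Rightarrow> complex vec) \<Rightarrow> complex mat" where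
  "err_op n N p \<Lambda> F G = mat n n (\<lambda>(j,k). \<Sum>i\<in>\<Lambda>. complex_of_real (weight n N p i) * G i $ j * cnj (F i $ k))"

definition op_norm :: "complex set \<Rightarrow> nat \<Rightarrow> complex mat \<Rightarrow> real" where
  "op_norm K n T = Sup {vnorm (T *\<^sub>v f) | f. f \<in> hspace K n \<and> vnorm f \<le> 1}"

definition O1 :: "complex set \<Rightarrow> nat \<Rightarrow> nat \<Rightarrow> (nat \<Rightarrow> real) \<Rightarrow> (nat \<Rightarrow> complex vec) \<Rightarrow> (nat \<Rightarrow> complex vec) \<Rightarrow> real" where
  "O1 K n N p F G = Max {op_norm K n (err_op n N p \<Lambda> F G) | \<Lambda>. \<Lambda> \<subseteq> {..<N} \<and> card \<Lambda> = 1}"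

definition A1 :: "complex set \<Rightarrow> nat \<Rightarrow> nat \<Rightarrow> (nat \<Rightarrow> real) \<Rightarrow> (nat \<Rightarrow> complex vec) \<Rightarrow> (nat \<Rightarrow> complex vec) \<Rightarrow> real" where
  "A1 K n N p F G = Max {(op_norm K n (err_op n N p \<Lambda> F G) + spectral_radius (err_op n N p \<Lambda> F G)) / 2
                         | \<Lambda>. \<Lambda> \<subseteq> {..<N} \<and> card \<Lambda> = 1}"

definition is_1_erasure_POD :: "complex set \<Rightarrow> nat \<Rightarrow> nat \<Rightarrow> (nat \<Rightarrow> real) \<Rightarrow> (nat \<Rightarrow> complex vec) \<Rightarrow> (nat \<Rightarrow> complex vec) \<Rightarrow> bool" where
  "is_1_erasure_POD K n N p F G \<longleftrightarrow> is_dual K n N F G \<and>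
     (\<forall>G'. is_dual K n N F G' \<longrightarrow> O1 K n N p F G \<le> O1 K n N p F G')"

definition Delta1 :: "complex set \<Rightarrow> nat \<Rightarrow> nat \<Rightarrow> (nat \<Rightarrow> real) \<Rightarrow> (nat \<Rightarrow> complex vec) \<Rightarrow> (nat \<Rightarrow> complex vec) set" where
  "Delta1 K n N p F = {G. is_dual K n N F G \<and>
     (\<forall>G'. is_dual K n N F G' \<longrightarrow> A1 K n N p F G \<le> A1 K n N p F G')}"

end

theory Submission
  imports Defs "HOL-Analysis.L2_Norm"
begin

text \<open>For a single erasure \<open>{i}\<close> the error operator is the rank-one map
  \<open>f \<mapsto> q\<^sub>i \<langle>f, f\<^sub>i\<rangle> g\<^sub>i\<close>; its norm is \<open>q\<^sub>i \<parallel>g\<^sub>i\<parallel> \<parallel>f\<^sub>i\<parallel>\<close> and its spectral radius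
  \<open>q\<^sub>i \<bar>\<langle>g\<^sub>i, f\<^sub>i\<rangle>\<bar>\<close>. Hence \<open>A1 \<le> O1\<close> for every dual, with equality for the canonical dual
  \<open>c\<^sub>i = f\<^sub>i / A\<close> of an \<open>A\<close>-tight frame, and a canonical dual in \<open>\<Delta>\<close> is a POD:
  \<open>O1(C) = A1(C) \<le> A1(G) \<le> O1(G)\<close>. Conversely, if a dual \<open>G\<close> had \<open>A1(G) < A1(C) = O1(C)\<close>,
  then the dual \<open>(1 - t) C + t G\<close> would have \<open>O1 < O1(C)\<close> for small \<open>t > 0\<close>: every maximal
  term \<open>q\<^sub>i \<parallel>c\<^sub>i\<parallel> \<parallel>f\<^sub>i\<parallel>\<close> strictly decreases, because \<open>A1(G) < O1(C)\<close> forces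
  \<open>Re \<langle>g\<^sub>i, c\<^sub>i\<rangle> < \<parallel>c\<^sub>i\<parallel>\<^sup>2\<close> there.\<close>

lemma inner_eq_sum:
  assumes "g \<in> carrier_vec n"
  shows "inner f g = (\<Sum>l<n. f $ l * cnj (g $ l))"
  using assms unfolding inner_def scalar_prod_def by (auto simp: atLeast0LessThan)

lemma vnorm_eq_L2_set: "vnorm v = L2_set (\<lambda>l. cmod (v $ l)) {..<dim_vec v}"
  unfolding vnorm_def L2_set_def ..

lemma vnorm_nonneg: "0 \<le> vnorm v"
  unfolding vnorm_eq_L2_set by (rule L2_set_nonneg)

lemma vnorm_square:
  assumes "v \<in> carrier_vec n"
  shows "(vnorm v)\<^sup>2 = (\<Sum>l<n. (cmod (v $ l))\<^sup>2)"
  using assms unfolding vnorm_def by (simp add: sum_nonneg)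

lemma inner_self:
  assumes "v \<in> carrier_vec n"
  shows "inner v v = complex_of_real ((vnorm v)\<^sup>2)"
  unfolding inner_eq_sum[OF assms] vnorm_square[OF assms] of_real_sum
  by (intro sum.cong) (auto simp: complex_norm_square simp flip: of_real_power)

lemma inner_cnj:
  assumes "f \<in> carrier_vec n" "g \<in> carrier_vec n"
  shows "inner g f = cnj (inner f g)"
  unfolding inner_eq_sum[OF assms(1)] inner_eq_sum[OF assms(2)] by (simp add: mult.commute)

lemma cmod_inner_le:
  assumes "f \<in> carrier_vec n" "g \<in> carrier_vec n"
  shows "cmod (inner f g) \<le> vnorm f * vnorm g"
proof -
  have "cmod (inner f g) \<le> (\<Sum>l<n. cmod (f $ l) * cmod (g $ l))"
    unfolding inner_eq_sum[OF assms(2)] by (rule order_trans[OF norm_sum]) (simp add: norm_mult)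
  also have "\<dots> \<le> L2_set (\<lambda>l. cmod (f $ l)) {..<n} * L2_set (\<lambda>l. cmod (g $ l)) {..<n}"
    using L2_set_mult_ineq[of "\<lambda>l. cmod (f $ l)" "\<lambda>l. cmod (g $ l)" "{..<n}"] by simp
  finally show ?thesis
    using assms by (simp add: vnorm_eq_L2_set)
qed

lemma vnorm_smult:
  assumes "u \<in> carrier_vec n"
  shows "vnorm (a \<cdot>\<^sub>v u) = cmod a * vnorm u"
  using assms unfolding vnorm_def
  by (simp add: norm_mult power_mult_distrib real_sqrt_mult flip: sum_distrib_left)

lemma vnorm_unit_vec: "j < n \<Longrightarrow> vnorm (unit_vec n j) = 1"
  unfolding vnorm_def by (simp add: unit_vec_def if_distrib[of cmod] if_distrib[of power2] cong: if_cong)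

lemma inner_add_left:
  assumes "g \<in> carrier_vec n" "a \<in> carrier_vec n" "b \<in> carrier_vec n"
  shows "inner (a + b) g = inner a g + inner b g"
  using assms unfolding inner_eq_sum[OF assms(1)] by (simp add: sum.distrib algebra_simps)

lemma inner_smult_left:
  assumes "g \<in> carrier_vec n" "f \<in> carrier_vec n"
  shows "inner (a \<cdot>\<^sub>v f) g = a * inner f g"
  using assms unfolding inner_eq_sum[OF assms(1)] by (simp add: sum_distrib_left mult.assoc)

lemma inner_real_smult_right:
  assumes "g \<in> carrier_vec n"
  shows "inner f (complex_of_real a \<cdot>\<^sub>v g) = complex_of_real a * inner f g"
  using assms unfolding inner_eq_sum[OF assms] inner_eq_sum[OF smult_carrier_vec[THEN iffD2, OF assms]]
  by (simp add: sum_distrib_left algebra_simps)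

lemma inner_unit_vec_left:
  assumes "g \<in> carrier_vec n" "j < n"
  shows "inner (unit_vec n j) g = cnj (g $ j)"
  unfolding inner_def using assms by simp

lemma hspace_carrier: "f \<in> hspace K n \<Longrightarrow> f \<in> carrier_vec n"
  unfolding hspace_def by auto

lemma hspace_real_lincomb:
  assumes "K = \<real> \<or> K = UNIV" "u \<in> hspace K n" "w \<in> hspace K n"
  shows "complex_of_real a \<cdot>\<^sub>v u + complex_of_real b \<cdot>\<^sub>v w \<in> hspace K n"
  using assms unfolding hspace_def by auto

lemma hspace_real_smult:
  assumes "K = \<real> \<or> K = UNIV" "u \<in> hspace K n"
  shows "complex_of_real a \<cdot>\<^sub>v u \<in> hspace K n"
  using assms unfolding hspace_def by auto

lemma unit_vec_hspace:
  assumes "K = \<real> \<or> K = UNIV" "j < n"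
  shows "unit_vec n j \<in> hspace K n"
  using assms unfolding hspace_def by auto

definition rank_one :: "nat \<Rightarrow> complex vec \<Rightarrow> complex vec \<Rightarrow> complex mat" where
  "rank_one n u v = mat n n (\<lambda>(j, k). u $ j * cnj (v $ k))"

lemma rank_one_carrier [simp]: "rank_one n u v \<in> carrier_mat n n"
  unfolding rank_one_def by simp

lemma rank_one_mult_vec:
  assumes "x \<in> carrier_vec n" "v \<in> carrier_vec n" "u \<in> carrier_vec n"
  shows "rank_one n u v *\<^sub>v x = inner x v \<cdot>\<^sub>v u"
proof (rule eq_vecI)
  fix j assume "j < dim_vec (inner x v \<cdot>\<^sub>v u)"
  with assms show "(rank_one n u v *\<^sub>v x) $ j = (inner x v \<cdot>\<^sub>v u) $ j"
    unfolding rank_one_def inner_eq_sum[OF assms(2)]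
    by (simp add: scalar_prod_def atLeast0LessThan sum_distrib_left sum_distrib_right mult_ac)
qed (use assms in \<open>simp add: rank_one_def\<close>)

lemma op_norm_rank_one:
  assumes K: "K = \<real> \<or> K = UNIV" and u: "u \<in> hspace K n" and v: "v \<in> hspace K n"
  shows "op_norm K n (rank_one n u v) = vnorm u * vnorm v"
  unfolding op_norm_def
proof (rule cSup_eq_maximum)
  have uc: "u \<in> carrier_vec n" and vc: "v \<in> carrier_vec n"
    using u v by (auto intro: hspace_carrier)
  have image: "vnorm (rank_one n u v *\<^sub>v f) = cmod (inner f v) * vnorm u" if "f \<in> carrier_vec n" for f
    using rank_one_mult_vec[OF that vc uc] vnorm_smult[OF uc] by simp
  show "vnorm u * vnorm v \<in> {vnorm (rank_one n u v *\<^sub>v f) |f. f \<in> hspace K n \<and> vnorm f \<le> 1}"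
  proof (cases "vnorm v = 0")
    case True
    have "0\<^sub>v n \<in> hspace K n" "vnorm (0\<^sub>v n) = 0" "inner (0\<^sub>v n) v = 0"
      using K by (auto simp: hspace_def vnorm_def inner_eq_sum[OF vc])
    then show ?thesis
      using True image[of "0\<^sub>v n"] by force
  next
    case False
    then have pos: "vnorm v > 0"
      using vnorm_nonneg[of v] by simp
    define f where "f = complex_of_real (1 / vnorm v) \<cdot>\<^sub>v v"
    have fh: "f \<in> hspace K n"
      unfolding f_def by (rule hspace_real_smult[OF K v])
    moreover have "vnorm f = 1"
      unfolding f_def vnorm_smult[OF vc] using pos by (simp add: norm_divide)
    moreover have "inner f v = complex_of_real (vnorm v)"
      unfolding f_def inner_smult_left[OF vc vc] inner_self[OF vc] using pos
      by (simp add: power2_eq_square)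
    ultimately show ?thesis
      using image[OF hspace_carrier[OF fh]] pos by (force simp: mult.commute)
  qed
  fix x assume "x \<in> {vnorm (rank_one n u v *\<^sub>v f) |f. f \<in> hspace K n \<and> vnorm f \<le> 1}"
  then obtain f where f: "f \<in> hspace K n" "vnorm f \<le> 1" and x: "x = vnorm (rank_one n u v *\<^sub>v f)"
    by blast
  have fc: "f \<in> carrier_vec n"
    using f(1) by (rule hspace_carrier)
  have "x \<le> vnorm f * vnorm v * vnorm u"
    unfolding x image[OF fc] by (intro mult_right_mono cmod_inner_le[OF fc vc] vnorm_nonneg)
  also have "\<dots> \<le> 1 * vnorm v * vnorm u"
    by (intro mult_right_mono f(2) vnorm_nonneg)
  finally show "x \<le> vnorm u * vnorm v"
    by (simp add: mult.commute)
qed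

lemma eigenvalue_rank_one:
  assumes u: "u \<in> carrier_vec n" and v: "v \<in> carrier_vec n"
    and ev: "eigenvalue (rank_one n u v) l" and l: "l \<noteq> 0"
  shows "l = inner u v"
proof -
  from ev obtain x where x: "x \<in> carrier_vec n" "x \<noteq> 0\<^sub>v n" and eq: "inner x v \<cdot>\<^sub>v u = l \<cdot>\<^sub>v x"
    unfolding eigenvalue_def eigenvector_def carrier_matD(1)[OF rank_one_carrier]
    using rank_one_mult_vec[OF _ v u] by auto
  have "inner x v \<noteq> 0"
  proof
    assume "inner x v = 0"
    then have "x $ j = 0" if "j < n" for j
      using arg_cong[OF eq, of "\<lambda>w. w $ j"] that u x l by simp
    then show False
      using x by (auto intro!: eq_vecI)
  qed
  moreover have "inner x v * inner u v = l * inner x v"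
    using arg_cong[OF eq, of "\<lambda>w. inner w v"] by (simp add: inner_smult_left[OF v] u x)
  ultimately show ?thesis
    by (simp add: mult.commute)
qed

lemma spectral_radius_rank_one:
  assumes n: "n > 0" and u: "u \<in> carrier_vec n" and v: "v \<in> carrier_vec n"
  shows "spectral_radius (rank_one n u v) = cmod (inner u v)"
proof (rule antisym)
  obtain l where "spectral_radius (rank_one n u v) = cmod l" "eigenvalue (rank_one n u v) l"
    using spectral_radius_mem_max(1)[OF rank_one_carrier n] unfolding spectrum_def by auto
  then show "spectral_radius (rank_one n u v) \<le> cmod (inner u v)"
    using eigenvalue_rank_one[OF u v] by (cases "l = 0") auto
  show "cmod (inner u v) \<le> spectral_radius (rank_one n u v)"
  proof (cases "inner u v = 0")
    case True
    then show ?thesis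
      using spectral_radius_mem_max(1)[OF rank_one_carrier n] by (metis imageE norm_ge_zero norm_zero)
  next
    case False
    then have "u \<noteq> 0\<^sub>v n"
      by (auto simp: inner_eq_sum[OF v])
    then have "eigenvalue (rank_one n u v) (inner u v)"
      unfolding eigenvalue_def eigenvector_def carrier_matD(1)[OF rank_one_carrier]
      using u rank_one_mult_vec[OF u v u] by auto
    then show ?thesis
      using spectral_radius_mem_max(2)[OF rank_one_carrier n] unfolding spectrum_def by auto
  qed
qed

lemma tight_frameE:
  assumes "is_tight_frame K n N F"
  obtains A where "A > 0" "\<forall>i<N. F i \<in> hspace K n"
    "\<And>f. f \<in> hspace K n \<Longrightarrow> (\<Sum>i<N. (cmod (inner f (F i)))\<^sup>2) = A * (vnorm f)\<^sup>2"
  using assms unfolding is_tight_frame_def by (metis order_antisym)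

lemma tight_frame_coordinate_sum:
  assumes K: "K = \<real> \<or> K = UNIV" and F: "\<forall>i<N. F i \<in> carrier_vec n"
    and tight: "\<And>f. f \<in> hspace K n \<Longrightarrow> (\<Sum>i<N. (cmod (inner f (F i)))\<^sup>2) = A * (vnorm f)\<^sup>2"
    and j: "j < n"
  shows "(\<Sum>i<N. (cmod (F i $ j))\<^sup>2) = A"
  using tight[OF unit_vec_hspace[OF K j]] F j by (simp add: vnorm_unit_vec inner_unit_vec_left)

lemma cmod_cnj_add_square:
  assumes "cmod w = 1"
  shows "(cmod (cnj a + w * cnj b))\<^sup>2 = (cmod a)\<^sup>2 + (cmod b)\<^sup>2 + 2 * Re (cnj w * (b * cnj a))"
proof -
  have "(cmod (cnj a + w * cnj b))\<^sup>2 = (cmod a)\<^sup>2 + (cmod (w * cnj b))\<^sup>2 + 2 * Re (cnj a * cnj (w * cnj b))"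
    unfolding cmod_power2 by (simp add: power2_eq_square algebra_simps)
  then show ?thesis
    using assms by (simp add: norm_mult mult_ac)
qed

text \<open>Polarization: testing the tight frame identity on \<open>e\<^sub>k + w e\<^sub>j\<close> isolates the
  \<open>(j, k)\<close> entry of the frame operator.\<close>

lemma tight_frame_cross_sum_Re:
  assumes K: "K = \<real> \<or> K = UNIV" and F: "\<forall>i<N. F i \<in> carrier_vec n"
    and tight: "\<And>f. f \<in> hspace K n \<Longrightarrow> (\<Sum>i<N. (cmod (inner f (F i)))\<^sup>2) = A * (vnorm f)\<^sup>2"
    and j: "j < n" and k: "k < n" and jk: "j \<noteq> k" and w: "cmod w = 1"
    and f: "unit_vec n k + w \<cdot>\<^sub>v unit_vec n j \<in> hspace K n"
  shows "Re (cnj w * (\<Sum>i<N. F i $ j * cnj (F i $ k))) = 0"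
proof -
  define f where "f = unit_vec n k + w \<cdot>\<^sub>v unit_vec n j"
  have inner_f: "inner f g = cnj (g $ k) + w * cnj (g $ j)" if "g \<in> carrier_vec n" for g
    unfolding f_def using that j k
    by (simp add: inner_add_left[OF that] inner_smult_left[OF that] inner_unit_vec_left)
  have "complex_of_real ((vnorm f)\<^sup>2) = 1 + w * cnj w"
    using inner_self[of f n] inner_f[of f] j k jk by (simp add: f_def)
  also have "\<dots> = 2"
    using w by (simp flip: complex_norm_square)
  finally have "(vnorm f)\<^sup>2 = 2"
    by (metis of_real_numeral of_real_eq_iff)
  moreover have "(\<Sum>i<N. (cmod (inner f (F i)))\<^sup>2) =
      (\<Sum>i<N. (cmod (F i $ k))\<^sup>2 + (cmod (F i $ j))\<^sup>2 + 2 * Re (cnj w * (F i $ j * cnj (F i $ k))))"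
    using F inner_f cmod_cnj_add_square[OF w] by (intro sum.cong) auto
  ultimately have "2 * A = 2 * A + 2 * Re (cnj w * (\<Sum>i<N. F i $ j * cnj (F i $ k)))"
    using tight[OF f[folded f_def]]
      tight_frame_coordinate_sum[OF K F tight j] tight_frame_coordinate_sum[OF K F tight k]
    by (simp add: sum.distrib Re_sum sum_distrib_left)
  then show ?thesis
    by simp
qed

lemma tight_frame_cross_sum_eq_0:
  assumes K: "K = \<real> \<or> K = UNIV" and F: "\<forall>i<N. F i \<in> hspace K n"
    and tight: "\<And>f. f \<in> hspace K n \<Longrightarrow> (\<Sum>i<N. (cmod (inner f (F i)))\<^sup>2) = A * (vnorm f)\<^sup>2"
    and j: "j < n" and k: "k < n" and jk: "j \<noteq> k"
  shows "(\<Sum>i<N. F i $ j * cnj (F i $ k)) = 0"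
proof -
  have Fc: "\<forall>i<N. F i \<in> carrier_vec n"
    using F hspace_carrier by blast
  define S where "S = (\<Sum>i<N. F i $ j * cnj (F i $ k))"
  have "unit_vec n k + 1 \<cdot>\<^sub>v unit_vec n j \<in> hspace K n"
    using hspace_real_lincomb[OF K unit_vec_hspace[OF K k] unit_vec_hspace[OF K j], of 1 1] by simp
  then have "Re S = 0"
    using tight_frame_cross_sum_Re[OF K Fc tight j k jk, of 1] by (simp add: S_def)
  moreover have "Im S = 0"
  proof (cases "K = UNIV")
    case True
    then show ?thesis
      using tight_frame_cross_sum_Re[OF K Fc tight j k jk, of \<i>] by (simp add: S_def hspace_def)
  next
    case False
    then have "\<forall>i<N. F i $ j \<in> \<real> \<and> F i $ k \<in> \<real>"
      using K F j k by (auto simp: hspace_def)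
    then show ?thesis
      by (simp add: S_def Im_sum complex_is_Real_iff)
  qed
  ultimately show ?thesis
    unfolding S_def[symmetric] by (simp add: complex_eqI)
qed

lemma frame_op_tight_frame:
  assumes K: "K = \<real> \<or> K = UNIV" and F: "\<forall>i<N. F i \<in> hspace K n"
    and tight: "\<And>f. f \<in> hspace K n \<Longrightarrow> (\<Sum>i<N. (cmod (inner f (F i)))\<^sup>2) = A * (vnorm f)\<^sup>2"
  shows "frame_op n N F = complex_of_real A \<cdot>\<^sub>m 1\<^sub>m n"
proof (rule eq_matI)
  have Fc: "\<forall>i<N. F i \<in> carrier_vec n"
    using F hspace_carrier by blast
  fix j k assume "j < dim_row (complex_of_real A \<cdot>\<^sub>m 1\<^sub>m n)" "k < dim_col (complex_of_real A \<cdot>\<^sub>m 1\<^sub>m n)"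
  then have j: "j < n" and k: "k < n"
    by auto
  have "(\<Sum>i<N. F i $ j * cnj (F i $ j)) = (\<Sum>i<N. complex_of_real ((cmod (F i $ j))\<^sup>2))"
    by (intro sum.cong refl complex_norm_square[symmetric])
  also have "\<dots> = complex_of_real A"
    using tight_frame_coordinate_sum[OF K Fc tight j] by (simp only: of_real_sum[symmetric])
  finally show "frame_op n N F $$ (j, k) = (complex_of_real A \<cdot>\<^sub>m 1\<^sub>m n) $$ (j, k)"
    using j k tight_frame_cross_sum_eq_0[OF K F tight j k] by (cases "j = k") (simp_all add: frame_op_def)
qed (auto simp: frame_op_def)

lemma inv_op_smult_one:
  assumes a: "a \<noteq> 0"
  shows "inv_op n (a \<cdot>\<^sub>m 1\<^sub>m n) = (1 / a) \<cdot>\<^sub>m 1\<^sub>m n"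
  unfolding inv_op_def
proof (rule the_equality)
  have "(b \<cdot>\<^sub>m 1\<^sub>m n) * (c \<cdot>\<^sub>m 1\<^sub>m n) = (b * c) \<cdot>\<^sub>m 1\<^sub>m n" for b c :: complex
    by (simp add: mult_smult_assoc_mat[of _ n n _ n]) (intro eq_matI; simp)
  moreover have "(1 :: complex) \<cdot>\<^sub>m 1\<^sub>m n = 1\<^sub>m n"
    by (intro eq_matI) auto
  ultimately show "(1 / a) \<cdot>\<^sub>m 1\<^sub>m n \<in> carrier_mat n n \<and> a \<cdot>\<^sub>m 1\<^sub>m n * ((1 / a) \<cdot>\<^sub>m 1\<^sub>m n) = 1\<^sub>m n
      \<and> (1 / a) \<cdot>\<^sub>m 1\<^sub>m n * (a \<cdot>\<^sub>m 1\<^sub>m n) = 1\<^sub>m n"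
    using a by simp
next
  fix M assume "M \<in> carrier_mat n n \<and> a \<cdot>\<^sub>m 1\<^sub>m n * M = 1\<^sub>m n \<and> M * (a \<cdot>\<^sub>m 1\<^sub>m n) = 1\<^sub>m n"
  then have M: "M \<in> carrier_mat n n" and "a \<cdot>\<^sub>m 1\<^sub>m n * M = 1\<^sub>m n"
    by auto
  then have "a \<cdot>\<^sub>m M = 1\<^sub>m n"
    using mult_smult_assoc_mat[of "1\<^sub>m n" n n M n a] by simp
  have "M = (1 / a) \<cdot>\<^sub>m (a \<cdot>\<^sub>m M)"
    using a M by (intro eq_matI) auto
  also have "\<dots> = (1 / a) \<cdot>\<^sub>m 1\<^sub>m n"
    using \<open>a \<cdot>\<^sub>m M = 1\<^sub>m n\<close> by simp
  finally show "M = (1 / a) \<cdot>\<^sub>m 1\<^sub>m n" .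
qed

lemma canonical_dual_tight_frame:
  assumes K: "K = \<real> \<or> K = UNIV" and A: "A > 0" and F: "\<forall>i<N. F i \<in> hspace K n"
    and tight: "\<And>f. f \<in> hspace K n \<Longrightarrow> (\<Sum>i<N. (cmod (inner f (F i)))\<^sup>2) = A * (vnorm f)\<^sup>2"
    and i: "i < N"
  shows "F i = complex_of_real A \<cdot>\<^sub>v canonical_dual n N F i"
proof -
  have Fi: "F i \<in> carrier_vec n"
    using F i hspace_carrier by blast
  have "canonical_dual n N F i = ((1 / complex_of_real A) \<cdot>\<^sub>m 1\<^sub>m n) *\<^sub>v F i"
    using A by (simp add: canonical_dual_def frame_op_tight_frame[OF K F tight] inv_op_smult_one)
  also have "\<dots> = (1 / complex_of_real A) \<cdot>\<^sub>v F i"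
    using Fi by (intro eq_vecI) auto
  finally show ?thesis
    using A Fi by (simp add: smult_smult_assoc)
qed

lemma eq_finsum_smult_vec_iff:
  fixes N :: nat
  assumes f: "f \<in> carrier_vec n" and v: "\<forall>i<N. v i \<in> carrier_vec n"
  shows "f = finsum_vec TYPE(complex) n (\<lambda>i. c i \<cdot>\<^sub>v v i) {..<N} \<longleftrightarrow>
    (\<forall>j<n. f $ j = (\<Sum>i<N. c i * v i $ j))"
proof -
  have cv: "(\<lambda>i. c i \<cdot>\<^sub>v v i) \<in> {..<N} \<rightarrow> carrier_vec n"
    using v by auto
  have "finsum_vec TYPE(complex) n (\<lambda>i. c i \<cdot>\<^sub>v v i) {..<N} $ j = (\<Sum>i<N. c i * v i $ j)"
    if "j < n" for j
  proof -
    have "(\<Sum>i<N. (c i \<cdot>\<^sub>v v i) $ j) = (\<Sum>i<N. c i * v i $ j)"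
      using v that by (intro sum.cong) auto
    then show ?thesis
      using index_finsum_vec[of "{..<N}" j n "\<lambda>i. c i \<cdot>\<^sub>v v i"] cv that by simp
  qed
  then show ?thesis
    using f finsum_vec_closed[OF cv] by (auto intro!: eq_vecI)
qed

lemma is_dual_iff:
  assumes F: "\<forall>i<N. F i \<in> hspace K n" and G: "\<forall>i<N. G i \<in> hspace K n"
  shows "is_dual K n N F G \<longleftrightarrow> is_frame K n N G \<and> (\<forall>f\<in>hspace K n. \<forall>j<n.
     f $ j = (\<Sum>i<N. inner f (F i) * G i $ j) \<and> f $ j = (\<Sum>i<N. inner f (G i) * F i $ j))"
proof -
  have "\<forall>i<N. F i \<in> carrier_vec n" "\<forall>i<N. G i \<in> carrier_vec n"
    using F G hspace_carrier by blast+
  then show ?thesis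
    unfolding is_dual_def using hspace_carrier
    by (auto simp: eq_finsum_smult_vec_iff)
qed

lemma is_dual_hspace: "is_dual K n N F G \<Longrightarrow> \<forall>i<N. G i \<in> hspace K n"
  unfolding is_dual_def is_frame_def by blast

lemma sum_cmod_inner_square_le:
  fixes N :: nat
  assumes "f \<in> carrier_vec n" "\<forall>i<N. G i \<in> carrier_vec n"
  shows "(\<Sum>i<N. (cmod (inner f (G i)))\<^sup>2) \<le> (\<Sum>i<N. (vnorm (G i))\<^sup>2) * (vnorm f)\<^sup>2"
  unfolding sum_distrib_right
proof (rule sum_mono)
  fix i assume "i \<in> {..<N}"
  then have "cmod (inner f (G i)) \<le> vnorm f * vnorm (G i)"
    using assms by (intro cmod_inner_le) auto
  then have "(cmod (inner f (G i)))\<^sup>2 \<le> (vnorm f * vnorm (G i))\<^sup>2"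
    by (rule power_mono) simp
  then show "(cmod (inner f (G i)))\<^sup>2 \<le> (vnorm (G i))\<^sup>2 * (vnorm f)\<^sup>2"
    by (simp add: power_mult_distrib mult.commute)
qed

lemma vnorm_square_if_reconstructs:
  assumes f: "f \<in> carrier_vec n" and F: "\<forall>i<N. F i \<in> carrier_vec n"
    and rec: "\<forall>j<n. f $ j = (\<Sum>i<N. inner f (H i) * F i $ j)"
  shows "complex_of_real ((vnorm f)\<^sup>2) = (\<Sum>i<N. inner f (H i) * cnj (inner f (F i)))"
proof -
  have "complex_of_real ((vnorm f)\<^sup>2) = (\<Sum>j<n. f $ j * cnj (f $ j))"
    by (simp only: inner_self[OF f, symmetric] inner_eq_sum[OF f])
  also have "\<dots> = (\<Sum>j<n. (\<Sum>i<N. inner f (H i) * F i $ j) * cnj (f $ j))"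
    using rec by (intro sum.cong) auto
  also have "\<dots> = (\<Sum>i<N. inner f (H i) * (\<Sum>j<n. F i $ j * cnj (f $ j)))"
    by (simp add: sum_distrib_left sum_distrib_right mult.assoc sum.swap[of _ "{..<n}"])
  also have "\<dots> = (\<Sum>i<N. inner f (H i) * cnj (inner f (F i)))"
    using F f by (intro sum.cong refl) (simp add: inner_eq_sum[symmetric] inner_cnj)
  finally show ?thesis .
qed

lemma vnorm_square_le_if_reconstructs:
  fixes N :: nat
  assumes f: "f \<in> carrier_vec n" and F: "\<forall>i<N. F i \<in> carrier_vec n"
    and rec: "\<forall>j<n. f $ j = (\<Sum>i<N. inner f (H i) * F i $ j)"
    and B: "B \<ge> 0" and bessel: "(\<Sum>i<N. (cmod (inner f (F i)))\<^sup>2) \<le> B * (vnorm f)\<^sup>2"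
  shows "(vnorm f)\<^sup>2 \<le> B * (\<Sum>i<N. (cmod (inner f (H i)))\<^sup>2)"
proof -
  define X where "X = L2_set (\<lambda>i. cmod (inner f (H i))) {..<N}"
  have "(vnorm f)\<^sup>2 = cmod (\<Sum>i<N. inner f (H i) * cnj (inner f (F i)))"
    by (metis vnorm_square_if_reconstructs[OF f F rec] norm_of_real abs_power2 abs_norm_cancel)
  also have "\<dots> \<le> (\<Sum>i<N. cmod (inner f (H i)) * cmod (inner f (F i)))"
    by (rule order_trans[OF norm_sum]) (simp add: norm_mult)
  also have "\<dots> \<le> X * L2_set (\<lambda>i. cmod (inner f (F i))) {..<N}"
    unfolding X_def
    using L2_set_mult_ineq[of "\<lambda>i. cmod (inner f (H i))" "\<lambda>i. cmod (inner f (F i))" "{..<N}"]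
    by simp
  also have "\<dots> \<le> X * sqrt (B * (vnorm f)\<^sup>2)"
    unfolding L2_set_def using bessel by (intro mult_left_mono real_sqrt_le_mono) (simp_all add: X_def)
  also have "\<dots> = X * sqrt B * vnorm f"
    by (simp add: real_sqrt_mult vnorm_nonneg)
  finally have sq: "(vnorm f)\<^sup>2 \<le> X * sqrt B * vnorm f" .
  have "vnorm f \<le> X * sqrt B"
  proof (cases "vnorm f = 0")
    case False
    then show ?thesis
      using sq vnorm_nonneg[of f] by (simp add: power2_eq_square)
  qed (use B in \<open>simp add: X_def\<close>)
  then have "(vnorm f)\<^sup>2 \<le> (X * sqrt B)\<^sup>2"
    by (rule power_mono[OF _ vnorm_nonneg])
  then show ?thesis
    using B by (simp add: power_mult_distrib X_def L2_set_def sum_nonneg mult.commute)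
qed

lemma is_frame_if_reconstructs:
  assumes F: "\<forall>i<N. F i \<in> carrier_vec n" and H: "\<forall>i<N. H i \<in> hspace K n"
    and rec: "\<forall>f\<in>hspace K n. \<forall>j<n. f $ j = (\<Sum>i<N. inner f (H i) * F i $ j)"
  shows "is_frame K n N H"
proof -
  define B where "B = (\<Sum>i<N. (vnorm (F i))\<^sup>2) + 1"
  define B' where "B' = (\<Sum>i<N. (vnorm (H i))\<^sup>2) + 1"
  have B: "B > 0" and B': "B' > 0"
    unfolding B_def B'_def by (simp_all add: sum_nonneg add_nonneg_pos)
  have Hc: "\<forall>i<N. H i \<in> carrier_vec n"
    using H hspace_carrier by blast
  have bessel: "(\<Sum>i<N. (cmod (inner f (G i)))\<^sup>2) \<le> ((\<Sum>i<N. (vnorm (G i))\<^sup>2) + 1) * (vnorm f)\<^sup>2"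
    if "f \<in> carrier_vec n" "\<forall>i<N. G i \<in> carrier_vec n" for f G
    using sum_cmod_inner_square_le[OF that] by (rule order_trans) (simp add: mult_right_mono)
  have "1 / B * (vnorm f)\<^sup>2 \<le> (\<Sum>i<N. (cmod (inner f (H i)))\<^sup>2)
      \<and> (\<Sum>i<N. (cmod (inner f (H i)))\<^sup>2) \<le> B' * (vnorm f)\<^sup>2" if f: "f \<in> hspace K n" for f
    using vnorm_square_le_if_reconstructs[OF hspace_carrier[OF f] F _ _ bessel[OF hspace_carrier[OF f] F]]
      bessel[OF hspace_carrier[OF f] Hc] rec f B
    by (auto simp: B_def B'_def field_simps)
  then show ?thesis
    unfolding is_frame_def using H B B' by (intro conjI exI[of _ "1 / B"] exI[of _ B']) auto
qed

lemma inner_real_lincomb_right: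
  assumes "u \<in> carrier_vec n" "w \<in> carrier_vec n"
  shows "inner f (complex_of_real a \<cdot>\<^sub>v u + complex_of_real b \<cdot>\<^sub>v w) =
    complex_of_real a * inner f u + complex_of_real b * inner f w"
proof -
  have c: "complex_of_real a \<cdot>\<^sub>v u + complex_of_real b \<cdot>\<^sub>v w \<in> carrier_vec n"
    using assms by simp
  show ?thesis
    using assms unfolding inner_eq_sum[OF assms(1)] inner_eq_sum[OF assms(2)] inner_eq_sum[OF c]
    by (simp add: sum.distrib sum_distrib_left algebra_simps)
qed

lemma is_dual_affine_comb:
  fixes t :: real
  assumes K: "K = \<real> \<or> K = UNIV" and F: "\<forall>i<N. F i \<in> hspace K n"
    and C: "is_dual K n N F C" and G: "is_dual K n N F G"
  shows "is_dual K n N F (\<lambda>i. complex_of_real (1 - t) \<cdot>\<^sub>v C i + complex_of_real t \<cdot>\<^sub>v G i)"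
    (is "is_dual K n N F ?H")
proof -
  have Ch: "\<forall>i<N. C i \<in> hspace K n" and Gh: "\<forall>i<N. G i \<in> hspace K n"
    using C G by (auto dest: is_dual_hspace)
  then have Cc: "C i \<in> carrier_vec n" and Gc: "G i \<in> carrier_vec n" if "i < N" for i
    using that hspace_carrier by blast+
  have Hh: "\<forall>i<N. ?H i \<in> hspace K n"
    using Ch Gh hspace_real_lincomb[OF K] by blast
  have H_index: "?H i $ j = complex_of_real (1 - t) * C i $ j + complex_of_real t * G i $ j"
    if "i < N" "j < n" for i j
    using Cc[OF that(1)] Gc[OF that(1)] that(2) by simp
  note C' = C[unfolded is_dual_iff[OF F Ch]] and G' = G[unfolded is_dual_iff[OF F Gh]]
  have synth: "f $ j = (\<Sum>i<N. inner f (F i) * ?H i $ j)" if f: "f \<in> hspace K n" and j: "j < n" for f j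
  proof -
    have "(\<Sum>i<N. inner f (F i) * ?H i $ j) =
        (\<Sum>i<N. inner f (F i) * (complex_of_real (1 - t) * C i $ j + complex_of_real t * G i $ j))"
      using j H_index by (intro sum.cong) simp_all
    also have "\<dots> = complex_of_real (1 - t) * (\<Sum>i<N. inner f (F i) * C i $ j)
        + complex_of_real t * (\<Sum>i<N. inner f (F i) * G i $ j)"
      by (simp only: sum.distrib sum_distrib_left distrib_left mult.left_commute)
    also have "\<dots> = complex_of_real (1 - t) * f $ j + complex_of_real t * f $ j"
      using C' G' f j by (metis (no_types, lifting))
    finally show ?thesis
      by (simp add: algebra_simps)
  qed
  have anal: "f $ j = (\<Sum>i<N. inner f (?H i) * F i $ j)" if f: "f \<in> hspace K n" and j: "j < n" for f j
  proof -
    have "(\<Sum>i<N. inner f (?H i) * F i $ j) =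
        (\<Sum>i<N. (complex_of_real (1 - t) * inner f (C i) + complex_of_real t * inner f (G i)) * F i $ j)"
      by (rule sum.cong[OF refl]) (simp only: lessThan_iff inner_real_lincomb_right[OF Cc Gc])
    also have "\<dots> = complex_of_real (1 - t) * (\<Sum>i<N. inner f (C i) * F i $ j)
        + complex_of_real t * (\<Sum>i<N. inner f (G i) * F i $ j)"
      by (simp only: sum.distrib sum_distrib_left distrib_right mult.assoc)
    also have "\<dots> = complex_of_real (1 - t) * f $ j + complex_of_real t * f $ j"
      using C' G' f j by (metis (no_types, lifting))
    finally show ?thesis
      by (simp add: algebra_simps)
  qed
  have "is_frame K n N ?H"
    using F Hh anal hspace_carrier by (intro is_frame_if_reconstructs[of N F]) blast+
  then show ?thesis
    unfolding is_dual_iff[OF F Hh] using synth anal by blast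
qed

lemma weight_nonneg:
  assumes "prob_seq N p" "i < N"
  shows "0 \<le> weight n N p i"
  using assms unfolding prob_seq_def weight_def by (auto intro!: mult_nonneg_nonneg divide_nonneg_nonneg)

lemma err_op_singleton:
  assumes "G i \<in> carrier_vec n"
  shows "err_op n N p {i} F G = rank_one n (complex_of_real (weight n N p i) \<cdot>\<^sub>v G i) (F i)"
  using assms unfolding err_op_def rank_one_def by (intro eq_matI) auto

lemma op_norm_err_op_singleton:
  assumes K: "K = \<real> \<or> K = UNIV" and p: "prob_seq N p" and i: "i < N"
    and F: "F i \<in> hspace K n" and G: "G i \<in> hspace K n"
  shows "op_norm K n (err_op n N p {i} F G) = weight n N p i * vnorm (G i) * vnorm (F i)"
  using weight_nonneg[OF p i] hspace_carrier[OF G]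
  by (simp add: err_op_singleton op_norm_rank_one[OF K hspace_real_smult[OF K G] F] vnorm_smult)

lemma spectral_radius_err_op_singleton:
  assumes n: "n > 0" and p: "prob_seq N p" and i: "i < N"
    and F: "F i \<in> carrier_vec n" and G: "G i \<in> carrier_vec n"
  shows "spectral_radius (err_op n N p {i} F G) = weight n N p i * cmod (inner (G i) (F i))"
  using weight_nonneg[OF p i] G
  by (simp add: err_op_singleton spectral_radius_rank_one[OF n _ F] inner_smult_left[OF F G] norm_mult)

lemma card_one_subsets_image:
  "{X \<Lambda> | \<Lambda>. \<Lambda> \<subseteq> {..<N} \<and> card \<Lambda> = 1} = (\<lambda>i. X {i}) ` {..<(N :: nat)}"
  by (auto simp: card_1_singleton_iff)

lemma O1_eq_Max:
  assumes K: "K = \<real> \<or> K = UNIV" and p: "prob_seq N p"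
    and F: "\<forall>i<N. F i \<in> hspace K n" and G: "\<forall>i<N. G i \<in> hspace K n"
  shows "O1 K n N p F G = Max ((\<lambda>i. weight n N p i * vnorm (G i) * vnorm (F i)) ` {..<N})"
  unfolding O1_def card_one_subsets_image
  using F G by (intro arg_cong[where f = Max] image_cong refl) (simp add: op_norm_err_op_singleton[OF K p])

lemma A1_eq_Max:
  assumes K: "K = \<real> \<or> K = UNIV" and n: "n > 0" and p: "prob_seq N p"
    and F: "\<forall>i<N. F i \<in> hspace K n" and G: "\<forall>i<N. G i \<in> hspace K n"
  shows "A1 K n N p F G = Max ((\<lambda>i. weight n N p i *
    (vnorm (G i) * vnorm (F i) + cmod (inner (G i) (F i))) / 2) ` {..<N})"
  unfolding A1_def card_one_subsets_image
proof (intro arg_cong[where f = Max] image_cong refl)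
  fix i assume "i \<in> {..<N}"
  then have i: "i < N" and "F i \<in> hspace K n" "G i \<in> hspace K n"
    using F G by auto
  then show "(op_norm K n (err_op n N p {i} F G) + spectral_radius (err_op n N p {i} F G)) / 2 =
      weight n N p i * (vnorm (G i) * vnorm (F i) + cmod (inner (G i) (F i))) / 2"
    by (simp add: op_norm_err_op_singleton[OF K p i] algebra_simps
        spectral_radius_err_op_singleton[OF n p i hspace_carrier hspace_carrier])
qed

lemma Max_image_mono:
  assumes "finite I" "\<And>i. i \<in> I \<Longrightarrow> f i \<le> g i"
  shows "Max (f ` I) \<le> Max (g ` I)"
proof (cases "I = {}")
  case False
  then show ?thesis
    using assms by (intro Max.boundedI) (auto intro: order_trans[OF _ Max_ge])
qed simp

lemma A1_le_O1:
  assumes K: "K = \<real> \<or> K = UNIV" and n: "n > 0" and p: "prob_seq N p"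
    and F: "\<forall>i<N. F i \<in> hspace K n" and G: "\<forall>i<N. G i \<in> hspace K n"
  shows "A1 K n N p F G \<le> O1 K n N p F G"
  unfolding A1_eq_Max[OF K n p F G] O1_eq_Max[OF K p F G]
proof (rule Max_image_mono)
  fix i assume "i \<in> {..<N}"
  then have "cmod (inner (G i) (F i)) \<le> vnorm (G i) * vnorm (F i)"
    using F G hspace_carrier by (intro cmod_inner_le[of _ n]) auto
  then have "weight n N p i * cmod (inner (G i) (F i)) \<le> weight n N p i * (vnorm (G i) * vnorm (F i))"
    using weight_nonneg[OF p] \<open>i \<in> {..<N}\<close> by (intro mult_left_mono) auto
  then show "weight n N p i * (vnorm (G i) * vnorm (F i) + cmod (inner (G i) (F i))) / 2
      \<le> weight n N p i * vnorm (G i) * vnorm (F i)"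
    by (simp add: algebra_simps)
qed simp

text \<open>For a dual proportional to the frame, the rank-one error operators are multiples of
  orthogonal projections, so spectral radius and norm coincide.\<close>

lemma A1_eq_O1_if_proportional:
  assumes K: "K = \<real> \<or> K = UNIV" and n: "n > 0" and p: "prob_seq N p" and A: "A \<ge> 0"
    and F: "\<forall>i<N. F i \<in> hspace K n" and C: "\<forall>i<N. C i \<in> hspace K n"
    and FC: "\<forall>i<N. F i = complex_of_real A \<cdot>\<^sub>v C i"
  shows "A1 K n N p F C = O1 K n N p F C"
  unfolding A1_eq_Max[OF K n p F C] O1_eq_Max[OF K p F C]
proof (intro arg_cong[where f = Max] image_cong refl)
  fix i assume "i \<in> {..<N}"
  then have Ci: "C i \<in> carrier_vec n" and Fi: "F i = complex_of_real A \<cdot>\<^sub>v C i"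
    using C FC hspace_carrier by auto
  have "cmod (inner (C i) (F i)) = vnorm (C i) * vnorm (F i)"
    using A unfolding Fi inner_real_smult_right[OF Ci] inner_self[OF Ci] vnorm_smult[OF Ci]
    by (simp add: norm_mult power2_eq_square)
  then show "weight n N p i * (vnorm (C i) * vnorm (F i) + cmod (inner (C i) (F i))) / 2 =
      weight n N p i * vnorm (C i) * vnorm (F i)"
    by simp
qed

lemma vnorm_add_square:
  assumes u: "u \<in> carrier_vec n" and w: "w \<in> carrier_vec n"
  shows "(vnorm (u + w))\<^sup>2 = (vnorm u)\<^sup>2 + (vnorm w)\<^sup>2 + 2 * Re (inner w u)"
proof -
  have "(cmod (u $ j + w $ j))\<^sup>2 = (cmod (u $ j))\<^sup>2 + (cmod (w $ j))\<^sup>2 + 2 * Re (w $ j * cnj (u $ j))" for j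
    unfolding cmod_power2 by (simp add: power2_eq_square algebra_simps)
  then show ?thesis
    using u w
    by (simp add: vnorm_square[of _ n] inner_eq_sum[OF u] sum.distrib Re_sum sum_distrib_left)
qed

lemma vnorm_affine_comb_square:
  assumes c: "c \<in> carrier_vec n" and g: "g \<in> carrier_vec n"
  shows "(vnorm (complex_of_real (1 - t) \<cdot>\<^sub>v c + complex_of_real t \<cdot>\<^sub>v g))\<^sup>2 =
    (vnorm c)\<^sup>2 + 2 * t * (Re (inner g c) - (vnorm c)\<^sup>2) + t\<^sup>2 * (vnorm (g - c))\<^sup>2"
proof -
  have comb: "complex_of_real (1 - t) \<cdot>\<^sub>v c + complex_of_real t \<cdot>\<^sub>v g = c + complex_of_real t \<cdot>\<^sub>v (g - c)"
    using c g by (intro eq_vecI) (auto simp: algebra_simps)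
  have "inner (g - c) c = inner g c - inner c c"
    using c g by (simp add: inner_eq_sum[OF c] algebra_simps sum_subtractf)
  then have re: "Re (inner (g - c) c) = Re (inner g c) - (vnorm c)\<^sup>2"
    by (simp add: inner_self[OF c])
  show ?thesis
    using c g unfolding comb
    by (simp add: vnorm_add_square[of _ n] vnorm_smult[of _ n] inner_smult_left[OF c] re
        power_mult_distrib algebra_simps)
qed

lemma tendsto_vnorm_affine_comb:
  assumes c: "c \<in> carrier_vec n" and g: "g \<in> carrier_vec n"
  shows "((\<lambda>t. vnorm (complex_of_real (1 - t) \<cdot>\<^sub>v c + complex_of_real t \<cdot>\<^sub>v g)) \<longlongrightarrow> vnorm c)
    (at_right 0)"
proof -
  define x where "x = Re (inner g c) - (vnorm c)\<^sup>2"
  have "((\<lambda>t. sqrt ((vnorm c)\<^sup>2 + 2 * t * x + t\<^sup>2 * (vnorm (g - c))\<^sup>2)) \<longlongrightarrow>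
      sqrt ((vnorm c)\<^sup>2 + 2 * 0 * x + 0\<^sup>2 * (vnorm (g - c))\<^sup>2)) (at_right 0)"
    by (intro tendsto_intros)
  moreover have "vnorm (complex_of_real (1 - t) \<cdot>\<^sub>v c + complex_of_real t \<cdot>\<^sub>v g) =
      sqrt ((vnorm c)\<^sup>2 + 2 * t * x + t\<^sup>2 * (vnorm (g - c))\<^sup>2)" for t
    by (simp add: vnorm_affine_comb_square[OF c g, symmetric] x_def vnorm_nonneg)
  ultimately show ?thesis
    by (simp add: vnorm_nonneg)
qed

lemma eventually_vnorm_affine_comb_less:
  assumes c: "c \<in> carrier_vec n" and g: "g \<in> carrier_vec n" and less: "Re (inner g c) < (vnorm c)\<^sup>2"
  shows "eventually (\<lambda>t. vnorm (complex_of_real (1 - t) \<cdot>\<^sub>v c + complex_of_real t \<cdot>\<^sub>v g) < vnorm c)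
    (at_right 0)"
proof -
  define x where "x = Re (inner g c) - (vnorm c)\<^sup>2"
  have "((\<lambda>t. 2 * x + t * (vnorm (g - c))\<^sup>2) \<longlongrightarrow> 2 * x + 0 * (vnorm (g - c))\<^sup>2) (at_right 0)"
    by (intro tendsto_intros)
  then have "eventually (\<lambda>t. 2 * x + t * (vnorm (g - c))\<^sup>2 < 0) (at_right 0)"
    using less by (intro order_tendstoD(2)) (auto simp: x_def)
  with eventually_at_right_less[of 0] show ?thesis
  proof eventually_elim
    case (elim t)
    then have "t * (2 * x + t * (vnorm (g - c))\<^sup>2) < 0"
      by (simp add: mult_pos_neg)
    then have "(vnorm (complex_of_real (1 - t) \<cdot>\<^sub>v c + complex_of_real t \<cdot>\<^sub>v g))\<^sup>2 < (vnorm c)\<^sup>2"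
      unfolding vnorm_affine_comb_square[OF c g] x_def[symmetric] by (simp add: algebra_simps power2_eq_square)
    then show ?case
      using vnorm_nonneg[of c] by (rule power2_less_imp_less)
  qed
qed

text \<open>When \<open>f = A c\<close>, the hypothesis on \<open>g\<close> forces \<open>Re \<langle>g, c\<rangle> < \<parallel>c\<parallel>\<^sup>2\<close>, so moving from \<open>c\<close>
  towards \<open>g\<close> strictly decreases \<open>\<parallel>c\<parallel>\<close>.\<close>

lemma eventually_affine_comb_err_norm_decreases:
  fixes q A :: real
  assumes c: "c \<in> carrier_vec n" and g: "g \<in> carrier_vec n" and q: "q \<ge> 0" and A: "A \<ge> 0"
    and f: "f = complex_of_real A \<cdot>\<^sub>v c"
    and g_less: "q * (vnorm g * vnorm f + cmod (inner g f)) / 2 < q * vnorm c * vnorm f"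
  shows "eventually (\<lambda>t. q * vnorm (complex_of_real (1 - t) \<cdot>\<^sub>v c + complex_of_real t \<cdot>\<^sub>v g) * vnorm f
    < q * vnorm c * vnorm f) (at_right 0)"
proof -
  have "cmod (inner g f) \<le> vnorm g * vnorm f"
    using c g by (simp add: f cmod_inner_le)
  then have "q * cmod (inner g f) \<le> q * (vnorm g * vnorm f)"
    using q by (rule mult_left_mono)
  then have "q * cmod (inner g f) < q * vnorm c * vnorm f"
    using g_less by (simp add: field_simps)
  then have less: "q * A * cmod (inner g c) < q * A * (vnorm c)\<^sup>2"
    using A by (simp add: f inner_real_smult_right[OF c] vnorm_smult[OF c] norm_mult power2_eq_square mult_ac)
  moreover from this have "q * A \<noteq> 0"
    by auto
  ultimately have qA: "q * A > 0" and cmod_less: "cmod (inner g c) < (vnorm c)\<^sup>2"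
    using q A by auto
  then have "(vnorm c)\<^sup>2 > 0"
    using norm_ge_zero[of "inner g c"] by linarith
  then have "q * vnorm f > 0"
    using qA A vnorm_nonneg[of c] by (simp add: f vnorm_smult[OF c] mult.assoc[symmetric] less_le)
  moreover have "Re (inner g c) < (vnorm c)\<^sup>2"
    using cmod_less complex_Re_le_cmod[of "inner g c"] by linarith
  ultimately show ?thesis
  proof (elim eventually_mono[OF eventually_vnorm_affine_comb_less[OF c g]])
    fix t assume "vnorm (complex_of_real (1 - t) \<cdot>\<^sub>v c + complex_of_real t \<cdot>\<^sub>v g) < vnorm c"
      and "q * vnorm f > 0"
    then have "q * vnorm f * vnorm (complex_of_real (1 - t) \<cdot>\<^sub>v c + complex_of_real t \<cdot>\<^sub>v g)
        < q * vnorm f * vnorm c"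
      by (rule mult_strict_left_mono)
    then show "q * vnorm (complex_of_real (1 - t) \<cdot>\<^sub>v c + complex_of_real t \<cdot>\<^sub>v g) * vnorm f
        < q * vnorm c * vnorm f"
      by (simp add: mult_ac)
  qed
qed

lemma eventually_affine_comb_err_norm_less:
  fixes q A M :: real
  assumes c: "c \<in> carrier_vec n" and g: "g \<in> carrier_vec n" and q: "q \<ge> 0" and A: "A \<ge> 0"
    and f: "f = complex_of_real A \<cdot>\<^sub>v c"
    and c_le: "q * vnorm c * vnorm f \<le> M"
    and g_less: "q * (vnorm g * vnorm f + cmod (inner g f)) / 2 < M"
  shows "eventually (\<lambda>t. q * vnorm (complex_of_real (1 - t) \<cdot>\<^sub>v c + complex_of_real t \<cdot>\<^sub>v g) * vnorm f < M)
    (at_right 0)"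
proof (cases "q * vnorm c * vnorm f < M")
  case True
  have "((\<lambda>t. q * vnorm (complex_of_real (1 - t) \<cdot>\<^sub>v c + complex_of_real t \<cdot>\<^sub>v g) * vnorm f) \<longlongrightarrow>
      q * vnorm c * vnorm f) (at_right 0)"
    by (intro tendsto_intros tendsto_vnorm_affine_comb[OF c g])
  then show ?thesis
    using True by (rule order_tendstoD(2))
next
  case False
  then have "M = q * vnorm c * vnorm f"
    using c_le by simp
  then show ?thesis
    using eventually_affine_comb_err_norm_decreases[OF c g q A f] g_less by simp
qed

lemma eventually_O1_affine_comb_less:
  assumes K: "K = \<real> \<or> K = UNIV" and n: "n > 0" and p: "prob_seq N p" and A: "A \<ge> 0"
    and F: "\<forall>i<N. F i \<in> hspace K n" and FC: "\<forall>i<N. F i = complex_of_real A \<cdot>\<^sub>v C i"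
    and C: "is_dual K n N F C" and G: "is_dual K n N F G"
    and less: "A1 K n N p F G < O1 K n N p F C"
  shows "eventually (\<lambda>t. O1 K n N p F (\<lambda>i. complex_of_real (1 - t) \<cdot>\<^sub>v C i + complex_of_real t \<cdot>\<^sub>v G i)
    < O1 K n N p F C) (at_right 0)"
proof -
  define M where "M = O1 K n N p F C"
  define Gt where "Gt t = (\<lambda>i. complex_of_real (1 - t) \<cdot>\<^sub>v C i + complex_of_real t \<cdot>\<^sub>v G i)" for t
  have Ch: "\<forall>i<N. C i \<in> hspace K n" and Gh: "\<forall>i<N. G i \<in> hspace K n"
    using C G by (auto dest: is_dual_hspace)
  have Gth: "\<forall>i<N. Gt t i \<in> hspace K n" for t
    unfolding Gt_def by (rule is_dual_hspace[OF is_dual_affine_comb[OF K F C G]])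
  have "N \<noteq> 0"
  proof
    assume "N = 0"
    then have "A1 K n N p F G = O1 K n N p F C"
      unfolding A1_eq_Max[OF K n p F Gh] O1_eq_Max[OF K p F Ch] by simp
    with less show False
      by simp
  qed
  have "\<forall>i\<in>{..<N}. eventually (\<lambda>t. weight n N p i * vnorm (Gt t i) * vnorm (F i) < M) (at_right 0)"
  proof
    fix i assume i: "i \<in> {..<N}"
    have "weight n N p i * vnorm (C i) * vnorm (F i) \<le> M"
      unfolding M_def O1_eq_Max[OF K p F Ch] using i by (intro Max_ge) auto
    moreover have "weight n N p i * (vnorm (G i) * vnorm (F i) + cmod (inner (G i) (F i))) / 2
        \<le> A1 K n N p F G"
      unfolding A1_eq_Max[OF K n p F Gh] using i by (intro Max_ge) auto
    ultimately show "eventually (\<lambda>t. weight n N p i * vnorm (Gt t i) * vnorm (F i) < M) (at_right 0)"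
      unfolding Gt_def using i Ch Gh FC less hspace_carrier weight_nonneg[OF p, of i n] A
      by (intro eventually_affine_comb_err_norm_less[where A = A and n = n]) (auto simp: M_def)
  qed
  then have "eventually (\<lambda>t. \<forall>i\<in>{..<N}. weight n N p i * vnorm (Gt t i) * vnorm (F i) < M) (at_right 0)"
    by (rule eventually_ball_finite[OF finite_lessThan])
  then show ?thesis
    unfolding M_def[symmetric] Gt_def[symmetric]
  proof (rule eventually_mono)
    fix t assume "\<forall>i\<in>{..<N}. weight n N p i * vnorm (Gt t i) * vnorm (F i) < M"
    then show "O1 K n N p F (Gt t) < M"
      unfolding O1_eq_Max[OF K p F Gth] using \<open>N \<noteq> 0\<close> by (subst Max_less_iff) auto
  qed
qed

lemma Delta1_if_is_1_erasure_POD: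
  assumes K: "K = \<real> \<or> K = UNIV" and n: "n > 0" and p: "prob_seq N p" and A: "A \<ge> 0"
    and F: "\<forall>i<N. F i \<in> hspace K n" and FC: "\<forall>i<N. F i = complex_of_real A \<cdot>\<^sub>v C i"
    and POD: "is_1_erasure_POD K n N p F C"
  shows "C \<in> Delta1 K n N p F"
proof -
  have C: "is_dual K n N F C" and O1_min: "\<And>G. is_dual K n N F G \<Longrightarrow> O1 K n N p F C \<le> O1 K n N p F G"
    using POD unfolding is_1_erasure_POD_def by auto
  have "A1 K n N p F C \<le> A1 K n N p F G" if G: "is_dual K n N F G" for G
  proof (rule ccontr)
    assume "\<not> A1 K n N p F C \<le> A1 K n N p F G"
    then have "A1 K n N p F G < O1 K n N p F C"
      using A1_eq_O1_if_proportional[OF K n p A F is_dual_hspace[OF C] FC] by simp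
    then obtain t where
      "O1 K n N p F (\<lambda>i. complex_of_real (1 - t) \<cdot>\<^sub>v C i + complex_of_real t \<cdot>\<^sub>v G i) < O1 K n N p F C"
      using eventually_happens'[OF trivial_limit_at_right_real
          eventually_O1_affine_comb_less[OF K n p A F FC C G]] by blast
    then show False
      using O1_min[OF is_dual_affine_comb[OF K F C G, of t]] by simp
  qed
  then show ?thesis
    unfolding Delta1_def using C by blast
qed

lemma is_1_erasure_POD_if_Delta1:
  assumes K: "K = \<real> \<or> K = UNIV" and n: "n > 0" and p: "prob_seq N p" and A: "A \<ge> 0"
    and F: "\<forall>i<N. F i \<in> hspace K n" and FC: "\<forall>i<N. F i = complex_of_real A \<cdot>\<^sub>v C i"
    and Delta: "C \<in> Delta1 K n N p F"
  shows "is_1_erasure_POD K n N p F C"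
proof -
  have C: "is_dual K n N F C" and A1_min: "\<And>G. is_dual K n N F G \<Longrightarrow> A1 K n N p F C \<le> A1 K n N p F G"
    using Delta unfolding Delta1_def by auto
  have "O1 K n N p F C \<le> O1 K n N p F G" if G: "is_dual K n N F G" for G
  proof -
    have "O1 K n N p F C = A1 K n N p F C"
      by (simp add: A1_eq_O1_if_proportional[OF K n p A F is_dual_hspace[OF C] FC])
    also have "\<dots> \<le> A1 K n N p F G"
      by (rule A1_min[OF G])
    also have "\<dots> \<le> O1 K n N p F G"
      by (rule A1_le_O1[OF K n p F is_dual_hspace[OF G]])
    finally show ?thesis .
  qed
  then show ?thesis
    unfolding is_1_erasure_POD_def using C by blast
qed

theorem theorem3p4:
  fixes K :: "complex set" and n N :: nat and F :: "nat \<Rightarrow> complex vec" and p :: "nat \<Rightarrow> real"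
  assumes "K = \<real> \<or> K = UNIV"
    and "n \<ge> 1"
    and "is_tight_frame K n N F"
    and "prob_seq N p"
  shows "is_1_erasure_POD K n N p F (canonical_dual n N F) \<longleftrightarrow>
         canonical_dual n N F \<in> Delta1 K n N p F"
proof -
  note K = assms(1) and p = assms(4)
  have n: "n > 0"
    using assms(2) by simp
  obtain A where A: "A > 0" and F: "\<forall>i<N. F i \<in> hspace K n"
    and tight: "\<And>f. f \<in> hspace K n \<Longrightarrow> (\<Sum>i<N. (cmod (inner f (F i)))\<^sup>2) = A * (vnorm f)\<^sup>2"
    using tight_frameE[OF assms(3)] by blast
  then have FC: "\<forall>i<N. F i = complex_of_real A \<cdot>\<^sub>v canonical_dual n N F i"
    using canonical_dual_tight_frame[OF K] by blast
  show ?thesis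
    using Delta1_if_is_1_erasure_POD[OF K n p _ F FC] is_1_erasure_POD_if_Delta1[OF K n p _ F FC] A
    by auto
qed

end
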